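(* Let $\alpha\in(0,1]$, $\beta=1-\alpha$, and let $f:[a,b]\to\mathbb{R}$ ($a<b$) be continuous on $[a,b]$ and $\alpha$-differentiable on $(a,b)$. Then there exists $c\in(a,b)$ such that $$D^\alpha f(c)=\beta f(c)+\alpha\,\frac{f(b)-f(a)}{b-a}.$$
   Context: For a real function $f$ defined on an open interval $(a,b)$, a number $\alpha\in[0,1]$ and $\beta=1-\alpha$, the deformable derivative ($\alpha$-derivative) of $f$ at $t\in(a,b)$ is $$D^\alpha f(t)=\lim_{\epsilon\to0}\frac{(1+\epsilon\beta)f(t+\epsilon\alpha)-f(t)}{\epsilon},$$ whenever this limit exists; in that case $f$ is called $\alpha$-differentiable at $t$. $f$ is $\alpha$-differentiable on $(a,b)$ if it is so at every point of $(a,b)$. *)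

theory Defs
  imports "HOL-Analysis.Analysis"
begin

definition alpha_quot :: "real \<Rightarrow> (real \<Rightarrow> real) \<Rightarrow> real \<Rightarrow> real \<Rightarrow> real" where
  "alpha_quot \<alpha> f t \<epsilon> = ((1 + \<epsilon> * (1 - \<alpha>)) * f (t + \<epsilon> * \<alpha>) - f t) / \<epsilon>"

definition alpha_differentiable_at :: "real \<Rightarrow> (real \<Rightarrow> real) \<Rightarrow> real \<Rightarrow> bool" where
  "alpha_differentiable_at \<alpha> f t \<longleftrightarrow> (\<exists>L. (alpha_quot \<alpha> f t \<longlongrightarrow> L) (at 0))"

definition alpha_deriv :: "real \<Rightarrow> (real \<Rightarrow> real) \<Rightarrow> real \<Rightarrow> real" where
  "alpha_deriv \<alpha> f t = Lim (at 0) (alpha_quot \<alpha> f t)"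

end

theory Submission
  imports Defs
begin

text \<open>
  Substituting \<open>\<epsilon> = h / \<alpha>\<close> turns the \<open>\<alpha>\<close>-difference quotient into
  \<open>(1 - \<alpha>) f(t + h) + \<alpha> (f(t + h) - f t) / h\<close>. Hence, at a point of continuity,
  \<open>\<alpha>\<close>-differentiability with \<open>\<alpha>\<close>-derivative \<open>L\<close> yields ordinary differentiability with
  derivative \<open>(L - (1 - \<alpha>) f t) / \<alpha>\<close>, and the claim is the classical mean value theorem
  rewritten in terms of \<open>D\<^sup>\<alpha>\<close>.
\<close>

lemma filterlim_divide_const_at_0:
  fixes c :: real
  assumes "c \<noteq> 0"
  shows "filterlim (\<lambda>h. h / c) (at 0) (at 0)"
proof (rule filterlim_atI)
  show "((\<lambda>h. h / c) \<longlongrightarrow> 0) (at 0)"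
    using tendsto_divide[OF tendsto_ident_at tendsto_const assms, of 0] by simp
  show "\<forall>\<^sub>F h in at 0. h / c \<noteq> 0"
    using assms by (simp add: eventually_at_filter)
qed

lemma difference_quotient_eq_alpha_quot:
  assumes "\<alpha> \<noteq> 0" "h \<noteq> 0"
  shows "(f (t + h) - f t) / h = (alpha_quot \<alpha> f t (h / \<alpha>) - (1 - \<alpha>) * f (t + h)) / \<alpha>"
  using assms by (simp add: alpha_quot_def field_simps)

lemma has_real_derivative_if_alpha_quot_tendsto:
  assumes "\<alpha> \<noteq> 0" "isCont f t" "(alpha_quot \<alpha> f t \<longlongrightarrow> L) (at 0)"
  shows "(f has_real_derivative (L - (1 - \<alpha>) * f t) / \<alpha>) (at t)"
proof -
  have "((\<lambda>h. alpha_quot \<alpha> f t (h / \<alpha>)) \<longlongrightarrow> L) (at 0)"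
    using filterlim_compose[OF assms(3) filterlim_divide_const_at_0[OF assms(1)]] .
  moreover have "((\<lambda>h. f (t + h)) \<longlongrightarrow> f t) (at 0)"
    using assms(2) by (simp add: isCont_iff)
  ultimately have "((\<lambda>h. (alpha_quot \<alpha> f t (h / \<alpha>) - (1 - \<alpha>) * f (t + h)) / \<alpha>)
      \<longlongrightarrow> (L - (1 - \<alpha>) * f t) / \<alpha>) (at 0)"
    by (intro tendsto_intros) (use assms(1) in auto)
  then have "((\<lambda>h. (f (t + h) - f t) / h) \<longlongrightarrow> (L - (1 - \<alpha>) * f t) / \<alpha>) (at 0)"
    by (rule Lim_transform_eventually)
       (simp add: eventually_at_filter difference_quotient_eq_alpha_quot[OF assms(1)])
  then show ?thesis
    by (simp add: DERIV_def)
qed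

lemma alpha_deriv_eqI:
  assumes "(alpha_quot \<alpha> f t \<longlongrightarrow> L) (at 0)"
  shows "alpha_deriv \<alpha> f t = L"
  unfolding alpha_deriv_def using assms by (intro tendsto_Lim) simp_all

theorem theorem3p2:
  fixes \<alpha> a b :: real and f :: "real \<Rightarrow> real"
  assumes "0 < \<alpha>" "\<alpha> \<le> 1" "a < b"
    and "continuous_on {a..b} f"
    and "\<forall>t\<in>{a<..<b}. alpha_differentiable_at \<alpha> f t"
  shows "\<exists>c\<in>{a<..<b}. alpha_deriv \<alpha> f c = (1 - \<alpha>) * f c + \<alpha> * ((f b - f a) / (b - a))"
proof -
  have derivative: "(f has_real_derivative (alpha_deriv \<alpha> f t - (1 - \<alpha>) * f t) / \<alpha>) (at t)"
    if t: "a < t" "t < b" for t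
  proof -
    obtain L where L: "(alpha_quot \<alpha> f t \<longlongrightarrow> L) (at 0)"
      using assms(5) t unfolding alpha_differentiable_at_def by force
    have "isCont f t"
      using assms(4) t by (intro continuous_on_interior[of "{a..b}"]) auto
    with L show ?thesis
      using assms(1) by (simp add: alpha_deriv_eqI has_real_derivative_if_alpha_quot_tendsto)
  qed
  obtain c l where c: "a < c" "c < b" "(f has_real_derivative l) (at c)" "f b - f a = (b - a) * l"
    using MVT[OF assms(3,4)] derivative real_differentiable_def by blast
  have "l = (alpha_deriv \<alpha> f c - (1 - \<alpha>) * f c) / \<alpha>"
    using DERIV_unique[OF c(3) derivative[OF c(1,2)]] .
  then have "alpha_deriv \<alpha> f c = (1 - \<alpha>) * f c + \<alpha> * l"
    using assms(1) by (simp add: field_simps)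
  moreover have "l = (f b - f a) / (b - a)"
    using assms(3) c(4) by simp
  ultimately show ?thesis
    using c(1,2)
    by auto
qed

end
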